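(* Let $Q>0$ and $\Gamma>0$. Let $f$ be a positive random variable with a continuous probability density function, and let $I$ be a nonnegative random variable independent of $f$ with $\mathbb{E}[I]=\Gamma$. For $\epsilon_0\in[0,1)$: <ul> <li>Let $\theta_a\ge 0$ satisfy $\Pr\{f/(1+I)<\theta_a\}=\epsilon_0$, and let $\theta_p\ge0$ satisfy $\Pr\{f/(1+\Gamma)<\theta_p\}=\epsilon_0$.</li> <li>Let $\gamma_a$ be determined by $\mathbb{E}[q^a]=Q$, where $q^a=\frac{\gamma_a(1+I)}{f}\mathbf{1}\left(\frac{f}{1+I}\ge\theta_a\right)$.</li> <li>Let $\gamma_p$ be determined by $\mathbb{E}[q^p]=Q$, where $q^p=\frac{\gamma_p(1+\Gamma)}{f}\mathbf{1}\left(\frac{f}{1+\Gamma}\ge\theta_p\right)$.</li> <li>Set $C^{{\rm OUT},a}_{\rm PR,TCI}(\epsilon_0)=\log(1+\gamma_a)$ and $C^{{\rm OUT},p}_{\rm PR,TCI}(\epsilon_0)=\log(1+\gamma_p)$.</li> </ul> Then $C^{{\rm OUT},a}_{\rm PR,TCI}(\epsilon_0)\geq C^{{\rm OUT},p}_{\rm PR,TCI}(\epsilon_0)$ for all $\epsilon_0$.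
   Context: $\mathbf{1}(\cdot)$ denotes the indicator function. Setting: a primary radio (PR) fading link with channel power gain $f$ and unit noise power. $I$ is the interference power caused by a cognitive radio at the PR receiver, independent of $f$. In the average-interference-power (AIP) case $I$ is random with mean $\Gamma$; in the peak-interference-power (PIP) case the interference equals $\Gamma$ always. The PR uses truncated-channel-inversion (TCI) power control with average power $Q$ and outage probability $\epsilon_0$. It transmits only when the effective gain exceeds the threshold, and inverts the channel to achieve constant received SNR $\gamma_a$ (respectively $\gamma_p$). $\log(1+\gamma)$ is the resulting PR outage capacity. *)

theory Defs
  imports "HOL-Probability.Probability"
begin

end

theory Submission
  imports Defs
begin

text \<open>
  Write \<open>X = f\<close>, \<open>Y = 1 + I\<close> and \<open>c = 1 + \<Gamma> = E[Y]\<close>. Since \<open>\<gamma> E[W] = Q\<close> for the respective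
  weights \<open>W\<close>, it suffices that \<open>E[(Y/X) 1(Y/X \<le> s)] \<le> E[(c/X) 1(c/X \<le> 1/\<theta>\<^sub>p)]\<close> with
  \<open>s = 1/\<theta>\<^sub>a\<close>. Subtracting \<open>s\<close> times the (equal) probabilities of transmission reduces this
  to an inequality between expectations of the concave function \<open>\<phi>(v) = min (v - s) 0\<close>, which
  is Jensen's inequality conditionally on \<open>X\<close>: \<open>\<phi>(Y/X) \<le> \<phi>(c/X) + \<phi>'(c/X) (Y - c)/X\<close>, and the
  last term has mean zero by independence. If \<open>\<theta>\<^sub>a = 0\<close> then \<open>\<epsilon>\<^sub>0 = 0\<close>, \<open>\<phi>\<close> is linear and
  both sides are equal.
\<close>

lemma (in prob_space) indep_var_integral_mult_centered:
  fixes X Y :: "'a \<Rightarrow> real" and h :: "real \<Rightarrow> real"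
  assumes "indep_var borel X borel Y"
    and "h \<in> borel_measurable borel" and "integrable M (\<lambda>\<omega>. h (X \<omega>))"
    and "integrable M Y"
  shows "integrable M (\<lambda>\<omega>. h (X \<omega>) * (Y \<omega> - expectation Y))"
    and "expectation (\<lambda>\<omega>. h (X \<omega>) * (Y \<omega> - expectation Y)) = 0"
proof -
  have indep: "indep_var borel (\<lambda>\<omega>. h (X \<omega>)) borel (\<lambda>\<omega>. Y \<omega> - expectation Y)"
    using indep_var_compose[unfolded comp_def, OF assms(1,2), of "\<lambda>y. y - expectation Y"]
    by simp
  have centered: "integrable M (\<lambda>\<omega>. Y \<omega> - expectation Y)"
    using assms(4) by simp
  show "integrable M (\<lambda>\<omega>. h (X \<omega>) * (Y \<omega> - expectation Y))"
    by (rule indep_var_integrable[OF indep assms(3) centered])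
  have "expectation (\<lambda>\<omega>. Y \<omega> - expectation Y) = 0"
    using assms(4) prob_space by simp
  then show "expectation (\<lambda>\<omega>. h (X \<omega>) * (Y \<omega> - expectation Y)) = 0"
    by (simp add: indep_var_lebesgue_integral[OF indep assms(3) centered])
qed

text \<open>The supergradient inequality for \<open>v \<mapsto> min (v - s) 0\<close> at \<open>u\<close>; the indicator of an
  arbitrary set \<open>B\<close> only weakens the right-hand side.\<close>

lemma truncated_le_supergradient:
  fixes u v s :: real
  shows "(v - s) * indicator {..s} v \<le> (u - s) * indicator B x + (if u < s then v - u else 0)"
  by (cases "x \<in> B") (auto simp: indicator_def)

lemma (in prob_space) truncated_inverse_mean_le_pos_threshold:
  fixes X Y :: "'a \<Rightarrow> real"
  assumes indep: "indep_var borel X borel Y"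
    and X: "X \<in> borel_measurable M" "AE \<omega> in M. X \<omega> > 0"
    and Y: "integrable M Y" "AE \<omega> in M. Y \<omega> > 0" "expectation Y = c" "c > 0"
    and "ta > 0"
    and P: "prob {\<omega> \<in> space M. X \<omega> / Y \<omega> < ta} = prob {\<omega> \<in> space M. X \<omega> / c < tp}"
    and Wp: "integrable M (\<lambda>\<omega>. c / X \<omega> * indicator {\<omega>. tp \<le> X \<omega> / c} \<omega>)"
  shows "expectation (\<lambda>\<omega>. Y \<omega> / X \<omega> * indicator {\<omega>. ta \<le> X \<omega> / Y \<omega>} \<omega>)
    \<le> expectation (\<lambda>\<omega>. c / X \<omega> * indicator {\<omega>. tp \<le> X \<omega> / c} \<omega>)"
proof -
  define s where "s = 1 / ta"
  \<comment> \<open>\<open>h x = \<phi>'(c/x) / x\<close>; \<open>R\<close> is the supergradient bound, rewritten with complementary events.\<close>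
  define h where "h x = (if x > 0 \<and> c / x < s then 1 / x else 0)" for x
  define Wa where "Wa = (\<lambda>\<omega>. Y \<omega> / X \<omega> * indicator {\<omega>. ta \<le> X \<omega> / Y \<omega>} \<omega>)"
  define Wp where "Wp = (\<lambda>\<omega>. c / X \<omega> * indicator {\<omega>. tp \<le> X \<omega> / c} \<omega>)"
  define A where "A = {\<omega> \<in> space M. X \<omega> / Y \<omega> < ta}"
  define B where "B = {\<omega> \<in> space M. X \<omega> / c < tp}"
  define R where "R = (\<lambda>\<omega>. Wp \<omega> + s * indicator B \<omega> - s * indicator A \<omega> + h (X \<omega>) * (Y \<omega> - c))"
  have Ym: "Y \<in> borel_measurable M"
    using Y(1) by (rule borel_measurable_integrable)
  have hm: "h \<in> borel_measurable borel"
    unfolding h_def by measurable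
  have "\<bar>h x\<bar> \<le> s / c" for x
    using \<open>c > 0\<close> \<open>ta > 0\<close> by (auto simp: h_def s_def field_simps)
  then have "integrable M (\<lambda>\<omega>. h (X \<omega>))"
    using X(1) hm by (intro integrable_const_bound[where B = "s / c"]) auto
  note centered = indep_var_integral_mult_centered[OF indep hm this Y(1), unfolded Y(3)]
  have AB: "A \<in> sets M" "B \<in> sets M"
    unfolding A_def B_def using X(1) Ym by measurable
  then have "integrable M (indicator A :: 'a \<Rightarrow> real)" "integrable M (indicator B :: 'a \<Rightarrow> real)"
    by (simp_all add: integrable_indicator_iff emeasure_finite less_top[symmetric])
  with Wp centered have R: "integrable M R"
    by (simp add: R_def Wp_def)
  have ER: "expectation R = expectation Wp"
    using \<open>integrable M (indicator A)\<close> \<open>integrable M (indicator B)\<close> Wp centered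
      P[folded A_def B_def] AB
    by (simp add: R_def Wp_def sets.Int_space_eq2)
  have "AE \<omega> in M. Wa \<omega> \<le> R \<omega>"
    using X(2) Y(2) AE_space
  proof eventually_elim
    case (elim \<omega>)
    have "ta \<le> X \<omega> / Y \<omega> \<longleftrightarrow> Y \<omega> / X \<omega> \<le> s"
      using elim \<open>ta > 0\<close> by (simp add: s_def field_simps)
    then have "Wa \<omega> - s * (1 - indicator A \<omega>) = (Y \<omega> / X \<omega> - s) * indicator {..s} (Y \<omega> / X \<omega>)"
      using elim by (auto simp: Wa_def A_def indicator_def)
    also have "\<dots> \<le> (c / X \<omega> - s) * indicator {\<omega>. tp \<le> X \<omega> / c} \<omega>
        + (if c / X \<omega> < s then Y \<omega> / X \<omega> - c / X \<omega> else 0)"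
      by (rule truncated_le_supergradient)
    also have "\<dots> = Wp \<omega> - s * (1 - indicator B \<omega>) + h (X \<omega>) * (Y \<omega> - c)"
      using elim by (auto simp: Wp_def B_def h_def indicator_def diff_divide_distrib)
    finally show ?case
      by (simp add: R_def algebra_simps)
  qed
  moreover have "AE \<omega> in M. 0 \<le> Wa \<omega>"
    using X(2) Y(2) by eventually_elim (simp add: Wa_def)
  ultimately have "expectation Wa \<le> expectation R"
    using R by (intro integral_mono_AE') (auto elim: eventually_mono)
  then show ?thesis
    using ER by (simp add: Wa_def Wp_def)
qed

lemma (in prob_space) truncated_inverse_mean_eq_zero_threshold:
  fixes X Y :: "'a \<Rightarrow> real"
  assumes indep: "indep_var borel X borel Y"
    and X: "X \<in> borel_measurable M" "AE \<omega> in M. X \<omega> > 0"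
    and Y: "integrable M Y" "AE \<omega> in M. Y \<omega> > 0" "expectation Y = c" "c > 0"
    and P: "prob {\<omega> \<in> space M. X \<omega> / Y \<omega> < 0} = prob {\<omega> \<in> space M. X \<omega> / c < tp}"
    and Wp: "integrable M (\<lambda>\<omega>. c / X \<omega> * indicator {\<omega>. tp \<le> X \<omega> / c} \<omega>)"
  shows "expectation (\<lambda>\<omega>. Y \<omega> / X \<omega> * indicator {\<omega>. 0 \<le> X \<omega> / Y \<omega>} \<omega>)
    = expectation (\<lambda>\<omega>. c / X \<omega> * indicator {\<omega>. tp \<le> X \<omega> / c} \<omega>)"
proof -
  define B where "B = {\<omega> \<in> space M. X \<omega> / c < tp}"
  have "AE \<omega> in M. \<not> X \<omega> / Y \<omega> < 0"
    using X(2) Y(2) by eventually_elim (simp add: not_less)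
  then have "prob B = 0"
    using P by (simp add: B_def prob_eq_0_AE)
  moreover have "B \<in> sets M"
    unfolding B_def using X(1) by measurable
  ultimately have "AE \<omega> in M. \<omega> \<notin> B"
    by (simp add: prob_eq_0)
  then have Wp_eq: "AE \<omega> in M. c / X \<omega> * indicator {\<omega>. tp \<le> X \<omega> / c} \<omega> = c * (1 / X \<omega>)"
    using AE_space by eventually_elim (auto simp: B_def indicator_def)
  have cX: "integrable M (\<lambda>\<omega>. c * (1 / X \<omega>))"
    by (rule integrable_cong_AE_imp[OF Wp _ Wp_eq]) (use X(1) in measurable)
  from integrable_mult_right[OF this, of "1 / c"] \<open>c > 0\<close>
  have "integrable M (\<lambda>\<omega>. 1 / X \<omega>)"
    by simp
  note centered = indep_var_integral_mult_centered[where h = "\<lambda>x. 1 / x", OF indep _ this Y(1),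
      unfolded Y(3)]
  have Ym: "Y \<in> borel_measurable M"
    using Y(1) by (rule borel_measurable_integrable)
  have "AE \<omega> in M. Y \<omega> / X \<omega> * indicator {\<omega>. 0 \<le> X \<omega> / Y \<omega>} \<omega>
      = c * (1 / X \<omega>) + 1 / X \<omega> * (Y \<omega> - c)"
    using X(2) Y(2) by eventually_elim (simp add: indicator_def field_simps)
  then have "expectation (\<lambda>\<omega>. Y \<omega> / X \<omega> * indicator {\<omega>. 0 \<le> X \<omega> / Y \<omega>} \<omega>)
      = expectation (\<lambda>\<omega>. c * (1 / X \<omega>) + 1 / X \<omega> * (Y \<omega> - c))"
    by (rule integral_cong_AE[rotated 2]) (use X(1) Ym in measurable)
  also have "\<dots> = expectation (\<lambda>\<omega>. c * (1 / X \<omega>))"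
    using centered cX by (simp add: Bochner_Integration.integral_add)
  also have "\<dots> = expectation (\<lambda>\<omega>. c / X \<omega> * indicator {\<omega>. tp \<le> X \<omega> / c} \<omega>)"
    by (rule integral_cong_AE[rotated 2, OF AE_symmetric[OF Wp_eq]]) (use X(1) in measurable)
  finally show ?thesis .
qed

lemma (in prob_space) truncated_inverse_mean_le:
  fixes X Y :: "'a \<Rightarrow> real"
  assumes "indep_var borel X borel Y"
    and "X \<in> borel_measurable M" "AE \<omega> in M. X \<omega> > 0"
    and "integrable M Y" "AE \<omega> in M. Y \<omega> > 0" "expectation Y = c" "c > 0"
    and "ta \<ge> 0"
    and "prob {\<omega> \<in> space M. X \<omega> / Y \<omega> < ta} = prob {\<omega> \<in> space M. X \<omega> / c < tp}"
    and "integrable M (\<lambda>\<omega>. c / X \<omega> * indicator {\<omega>. tp \<le> X \<omega> / c} \<omega>)"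
  shows "expectation (\<lambda>\<omega>. Y \<omega> / X \<omega> * indicator {\<omega>. ta \<le> X \<omega> / Y \<omega>} \<omega>)
    \<le> expectation (\<lambda>\<omega>. c / X \<omega> * indicator {\<omega>. tp \<le> X \<omega> / c} \<omega>)"
proof (cases "ta = 0")
  case True
  then show ?thesis
    using truncated_inverse_mean_eq_zero_threshold[OF assms(1-7)] assms(9,10) by simp
next
  case False
  then show ?thesis
    using truncated_inverse_mean_le_pos_threshold[OF assms(1-7) _ assms(9,10)] assms(8) by simp
qed

lemma ln_one_plus_le_of_mult_eq:
  fixes Q a b \<gamma> \<gamma>' :: real
  assumes "Q > 0" "0 \<le> a" "a \<le> b" "\<gamma> * a = Q" "\<gamma>' * b = Q"
  shows "ln (1 + \<gamma>') \<le> ln (1 + \<gamma>)"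
proof -
  have "a > 0" "b > 0"
    using assms by (auto intro!: neq_le_trans)
  then have "\<gamma>' = Q / b" "\<gamma> = Q / a"
    using assms(4,5) by (simp_all add: field_simps)
  then have "0 < \<gamma>'" "\<gamma>' \<le> \<gamma>"
    using \<open>a > 0\<close> \<open>b > 0\<close> assms(1,3) by (simp_all add: divide_left_mono)
  then show ?thesis
    by simp
qed

theorem theorem4p5:
  fixes M :: "'s measure"
    and f I :: "'s \<Rightarrow> real"
    and g :: "real \<Rightarrow> real"
    and Q \<Gamma> \<epsilon>\<^sub>0 \<theta>\<^sub>a \<theta>\<^sub>p \<gamma>\<^sub>a \<gamma>\<^sub>p :: real
  assumes "prob_space M"
    and "Q > 0" and "\<Gamma> > 0"
    and "AE \<omega> in M. f \<omega> > 0"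
    and "\<And>x. g x \<ge> 0" and "continuous_on UNIV g"
    and "distributed M lborel f (\<lambda>x. ennreal (g x))"
    and "I \<in> borel_measurable M"
    and "AE \<omega> in M. I \<omega> \<ge> 0"
    and "prob_space.indep_var M borel f borel I"
    and "integrable M I" and "prob_space.expectation M I = \<Gamma>"
    and "0 \<le> \<epsilon>\<^sub>0" and "\<epsilon>\<^sub>0 < 1"
    and "\<theta>\<^sub>a \<ge> 0"
    and "measure M {\<omega> \<in> space M. f \<omega> / (1 + I \<omega>) < \<theta>\<^sub>a} = \<epsilon>\<^sub>0"
    and "\<theta>\<^sub>p \<ge> 0"
    and "measure M {\<omega> \<in> space M. f \<omega> / (1 + \<Gamma>) < \<theta>\<^sub>p} = \<epsilon>\<^sub>0"
    and "prob_space.expectation M (\<lambda>\<omega>. \<gamma>\<^sub>a * (1 + I \<omega>) / f \<omega>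
           * indicator {\<omega>. f \<omega> / (1 + I \<omega>) \<ge> \<theta>\<^sub>a} \<omega>) = Q"
    and "prob_space.expectation M (\<lambda>\<omega>. \<gamma>\<^sub>p * (1 + \<Gamma>) / f \<omega>
           * indicator {\<omega>. f \<omega> / (1 + \<Gamma>) \<ge> \<theta>\<^sub>p} \<omega>) = Q"
  shows "ln (1 + \<gamma>\<^sub>a) \<ge> ln (1 + \<gamma>\<^sub>p)"
proof -
  interpret prob_space M by fact
  define Wa where "Wa = (\<lambda>\<omega>. (1 + I \<omega>) / f \<omega> * indicator {\<omega>. \<theta>\<^sub>a \<le> f \<omega> / (1 + I \<omega>)} \<omega>)"
  define Wp where "Wp = (\<lambda>\<omega>. (1 + \<Gamma>) / f \<omega> * indicator {\<omega>. \<theta>\<^sub>p \<le> f \<omega> / (1 + \<Gamma>)} \<omega>)"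
  have Ea: "\<gamma>\<^sub>a * expectation Wa = Q" and Ep: "\<gamma>\<^sub>p * expectation Wp = Q"
    using assms(19,20) unfolding Wa_def Wp_def integral_mult_right_zero[symmetric]
    by (simp_all add: ac_simps)
  have "integrable M Wp"
    using Ep \<open>Q > 0\<close> not_integrable_integral_eq by fastforce
  moreover have "indep_var borel f borel (\<lambda>\<omega>. 1 + I \<omega>)"
    using indep_var_compose[where ?Y1.0 = id and ?Y2.0 = "\<lambda>y. 1 + y"
        and ?N1.0 = borel and ?N2.0 = borel, OF assms(10)]
    by (simp add: comp_def)
  moreover have "AE \<omega> in M. 1 + I \<omega> > 0"
    using assms(9) by eventually_elim simp
  moreover have "expectation (\<lambda>\<omega>. 1 + I \<omega>) = 1 + \<Gamma>"
    using assms(11,12) prob_space by simp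
  ultimately have "expectation Wa \<le> expectation Wp"
    unfolding Wa_def Wp_def using assms(3,4,7,11,15-18)
    by (intro truncated_inverse_mean_le) (auto dest: distributed_measurable)
  moreover have "0 \<le> expectation Wa"
    using assms(4,9) by (intro integral_nonneg_AE) (auto simp: Wa_def elim: eventually_mono)
  ultimately show ?thesis
    using ln_one_plus_le_of_mult_eq[OF \<open>Q > 0\<close> _ _ Ea Ep] by simp
qed

end
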